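(* Let $G$ be a finite simple graph with $m$ edges and maximum degree $\Delta$, such that each connected component of $G$ has at least one edge. Then $$ M_1(G) \le \max \big\{2\Delta^2 +m^2 +(6-2\Delta) m - 2\Delta -4\,,\; 2\Delta^2 +m^2 +(4-2\Delta) m + 4 \,,\; m(m-1) \big\}, $$ where $M_1(G)=\sum_{u\in V(G)} d_u^2$ is the first Zagreb index.
   Context: $d_u$ denotes the degree of vertex $u$. The first Zagreb index is $M_1(G)=\sum_{uv\in E(G)}(d_u+d_v)=\sum_{u\in V(G)}d_u^2$. *)

theory Defs
  imports Main
begin

definition simple_graph :: "'a set \<Rightarrow> 'a set set \<Rightarrow> bool" where
  "simple_graph V E \<longleftrightarrow> finite V \<and> (\<forall>e\<in>E. e \<subseteq> V \<and> card e = 2)"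

definition degree :: "'a set set \<Rightarrow> 'a \<Rightarrow> nat" where
  "degree E u = card {e \<in> E. u \<in> e}"

definition max_degree :: "'a set \<Rightarrow> 'a set set \<Rightarrow> nat" where
  "max_degree V E = Max (insert 0 (degree E ` V))"

definition first_zagreb :: "'a set \<Rightarrow> 'a set set \<Rightarrow> nat" where
  "first_zagreb V E = (\<Sum>u\<in>V. (degree E u)^2)"

definition adj :: "'a set set \<Rightarrow> 'a \<Rightarrow> 'a \<Rightarrow> bool" where
  "adj E u v \<longleftrightarrow> {u, v} \<in> E"

definition reachable :: "'a set set \<Rightarrow> 'a \<Rightarrow> 'a \<Rightarrow> bool" where
  "reachable E u v \<longleftrightarrow> (adj E)\<^sup>*\<^sup>* u v"

definition component :: "'a set \<Rightarrow> 'a set set \<Rightarrow> 'a \<Rightarrow> 'a set" where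
  "component V E v = {u \<in> V. reachable E v u}"

definition components :: "'a set \<Rightarrow> 'a set set \<Rightarrow> 'a set set" where
  "components V E = component V E ` V"

end

theory Submission
  imports Defs
begin

text \<open>Counting incidences twice gives \<open>M\<^sub>1 = \<Sum>e\<in>E. \<Sum>f\<in>E. |e \<inter> f|\<close>. Split \<open>E\<close> into the
\<open>\<Delta>\<close> edges at a vertex \<open>u\<close> of maximum degree and the \<open>n = m - \<Delta>\<close> remaining ones. Since distinct
edges share at most one vertex, each of the two blocks contributes at most \<open>k(k + 1)\<close> for its
size \<open>k\<close>; and an edge avoiding \<open>u\<close> meets the edges at \<open>u\<close> at most twice in total, because each
of its endpoints \<open>a\<close> lies on at most one of them, namely \<open>{u, a}\<close>. Hence
\<open>M\<^sub>1 \<le> \<Delta>(\<Delta> + 1) + n(n + 5)\<close>. The first two expressions in the maximum exceed this by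
\<open>n + 3\<Delta> - 4\<close> and \<open>3\<Delta> - n + 4\<close>, which add up to \<open>6\<Delta> \<ge> 0\<close>, so one of them is an upper bound.\<close>

lemma card_eq_sum_of_bool:
  assumes "finite A"
  shows "card {x\<in>A. P x} = (\<Sum>x\<in>A. of_bool (P x))"
  using assms by (simp add: Collect_conj_eq Int_commute)

lemma sum_card_incident_sq_eq_sum_card_Int:
  assumes "finite V" "finite E" "\<forall>e\<in>E. e \<subseteq> V"
  shows "(\<Sum>v\<in>V. card {e\<in>E. v \<in> e}^2) = (\<Sum>e\<in>E. \<Sum>f\<in>E. card (e \<inter> f))"
proof -
  have "(\<Sum>v\<in>V. card {e\<in>E. v \<in> e}^2)
      = (\<Sum>v\<in>V. \<Sum>e\<in>E. \<Sum>f\<in>E. of_bool (v \<in> e) * of_bool (v \<in> f))"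
    using assms(2) by (simp only: card_eq_sum_of_bool power2_eq_square sum_product)
  also have "\<dots> = (\<Sum>e\<in>E. \<Sum>f\<in>E. \<Sum>v\<in>V. of_bool (v \<in> e) * of_bool (v \<in> f))"
    by (subst sum.swap) (simp only: sum.swap[of _ V])
  also have "\<dots> = (\<Sum>e\<in>E. \<Sum>f\<in>E. card (e \<inter> f))"
  proof (intro sum.cong refl)
    fix e f assume "e \<in> E"
    then have "e \<inter> f = {v\<in>V. v \<in> e \<and> v \<in> f}" using assms(3) by blast
    then show "(\<Sum>v\<in>V. of_bool (v \<in> e) * of_bool (v \<in> f)) = card (e \<inter> f)"
      using card_eq_sum_of_bool[OF assms(1)] by (simp only: of_bool_conj)
  qed
  finally show ?thesis .
qed

lemma card_Int_le_1_if_card_2: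
  assumes "card e = 2" "card f = 2" "e \<noteq> f"
  shows "card (e \<inter> f) \<le> 1"
proof (rule ccontr)
  assume "\<not> card (e \<inter> f) \<le> 1"
  then have "card (e \<inter> f) \<ge> 2" by simp
  moreover have "finite e" "finite f" using assms by (auto intro: card_ge_0_finite)
  ultimately have "e \<inter> f = e" "e \<inter> f = f"
    using assms by (metis Int_lower1 Int_lower2 card_seteq)+
  then show False using assms(3) by simp
qed

lemma sum_sum_card_Int_le:
  assumes "finite A" "\<forall>e\<in>A. card e = 2"
  shows "(\<Sum>e\<in>A. \<Sum>f\<in>A. card (e \<inter> f)) \<le> card A * (card A + 1)"
proof -
  have "(\<Sum>f\<in>A. card (e \<inter> f)) \<le> card A + 1" if "e \<in> A" for e
  proof -
    have "(\<Sum>f\<in>A. card (e \<inter> f)) = card (e \<inter> e) + (\<Sum>f\<in>A - {e}. card (e \<inter> f))"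
      using assms(1) that by (simp add: sum.remove)
    also have "\<dots> \<le> 2 + (\<Sum>f\<in>A - {e}. 1)"
      using assms that by (intro add_mono sum_mono card_Int_le_1_if_card_2) auto
    also have "\<dots> = card A + 1"
      using card_Suc_Diff1[OF assms(1) that] by simp
    finally show ?thesis .
  qed
  then have "(\<Sum>e\<in>A. \<Sum>f\<in>A. card (e \<inter> f)) \<le> (\<Sum>e\<in>A. card A + 1)"
    by (rule sum_mono)
  then show ?thesis by simp
qed

lemma sum_card_Int_incident_le:
  assumes "finite E" "\<forall>e\<in>E. card e = 2" "finite f" "u \<notin> f"
  shows "(\<Sum>e\<in>{e\<in>E. u \<in> e}. card (e \<inter> f)) \<le> card f"
proof -
  let ?S = "{e\<in>E. u \<in> e}"
  have "(\<Sum>e\<in>?S. card (e \<inter> f)) = (\<Sum>e\<in>?S. \<Sum>a\<in>f. of_bool (a \<in> e))"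
    using assms(3) by (intro sum.cong refl) (simp add: Int_commute)
  also have "\<dots> = (\<Sum>a\<in>f. card {e\<in>?S. a \<in> e})"
  proof (subst sum.swap, rule sum.cong[OF refl])
    fix a
    show "(\<Sum>e\<in>?S. of_bool (a \<in> e)) = card {e\<in>?S. a \<in> e}"
      using assms(1) by (intro card_eq_sum_of_bool[symmetric]) simp
  qed
  also have "\<dots> \<le> (\<Sum>a\<in>f. 1)"
  proof (rule sum_mono)
    fix a assume "a \<in> f"
    have "{e\<in>?S. a \<in> e} \<subseteq> {{u, a}}"
    proof
      fix e assume "e \<in> {e\<in>?S. a \<in> e}"
      moreover have "a \<noteq> u" using assms(4) \<open>a \<in> f\<close> by blast
      ultimately show "e \<in> {{u, a}}" using assms(2) by (auto simp: card_2_iff)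
    qed
    then show "card {e\<in>?S. a \<in> e} \<le> 1"
      using card_mono[of "{{u, a}}"] by simp
  qed
  finally show ?thesis by simp
qed

lemma simple_graph_finite_edges:
  assumes "simple_graph V E"
  shows "finite E"
proof -
  have "E \<subseteq> Pow V" using assms by (auto simp: simple_graph_def)
  then show ?thesis using assms finite_subset by (auto simp: simple_graph_def)
qed

lemma first_zagreb_eq_sum_card_Int:
  assumes "simple_graph V E"
  shows "first_zagreb V E = (\<Sum>e\<in>E. \<Sum>f\<in>E. card (e \<inter> f))"
  using assms sum_card_incident_sq_eq_sum_card_Int[of V E] simple_graph_finite_edges[OF assms]
  by (simp add: first_zagreb_def degree_def simple_graph_def)

lemma first_zagreb_le_degree_bound:
  fixes u :: 'a
  assumes "simple_graph V E"
  defines "d \<equiv> degree E u" and "n \<equiv> card E - degree E u"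
  shows "first_zagreb V E \<le> d * (d + 1) + n * (n + 5)"
proof -
  define S where "S = {e\<in>E. u \<in> e}"
  define N where "N = {e\<in>E. u \<notin> e}"
  let ?I = "\<lambda>A B. \<Sum>e\<in>A. \<Sum>f\<in>B. card (e \<inter> f)"
  have fin: "finite E" by (rule simple_graph_finite_edges[OF assms(1)])
  have E2: "\<forall>e\<in>E. card e = 2" using assms(1) by (simp add: simple_graph_def)
  have finSN: "finite S" "finite N" using fin by (auto simp: S_def N_def)
  have E_split: "E = S \<union> N" "S \<inter> N = {}" by (auto simp: S_def N_def)
  have "card E = card S + card N"
    using card_Un_disjoint[OF finSN E_split(2)] E_split(1) by simp
  then have cards: "card S = d" "card N = n"
    by (simp_all add: d_def n_def degree_def S_def)
  have cross: "?I S N \<le> 2 * n" "?I N S \<le> 2 * n"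
  proof -
    have row: "(\<Sum>e\<in>S. card (e \<inter> f)) \<le> 2" if "f \<in> N" for f
      using sum_card_Int_incident_le[OF fin E2, of f u] that E2
      by (auto simp: S_def N_def card_ge_0_finite)
    have "(\<Sum>f\<in>N. \<Sum>e\<in>S. card (e \<inter> f)) \<le> (\<Sum>f\<in>N. 2)"
      by (intro sum_mono row)
    then have bound: "(\<Sum>f\<in>N. \<Sum>e\<in>S. card (e \<inter> f)) \<le> 2 * n"
      using cards by simp
    show "?I S N \<le> 2 * n" using bound by (subst sum.swap)
    show "?I N S \<le> 2 * n" using bound by (simp add: Int_commute)
  qed
  have "first_zagreb V E = ?I E E"
    by (rule first_zagreb_eq_sum_card_Int[OF assms(1)])
  also have "\<dots> = ?I S S + ?I S N + ?I N S + ?I N N"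
    unfolding E_split(1) using finSN E_split(2) by (simp add: sum.union_disjoint sum.distrib)
  also have "\<dots> \<le> d * (d + 1) + 2 * n + 2 * n + n * (n + 1)"
    using sum_sum_card_Int_le[of S] sum_sum_card_Int_le[of N] finSN E2 cross cards
    by (intro add_mono) (auto simp: S_def N_def)
  finally show ?thesis by (simp add: algebra_simps)
qed

lemma ex_degree_eq_max_degree:
  assumes "simple_graph V E"
  obtains u where "degree E u = max_degree V E"
proof (cases "E = {}")
  case True
  then have "max_degree V E = 0"
    by (cases "V = {}") (simp_all add: max_degree_def degree_def image_constant_conv)
  with True that show ?thesis by (simp add: degree_def)
next
  case False
  then obtain e where "e \<in> E" by blast
  then have "e \<noteq> {}" using assms by (auto simp: simple_graph_def)
  then obtain a where "a \<in> e" by blast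
  have fin: "finite (insert 0 (degree E ` V))"
    using assms by (simp add: simple_graph_def)
  have "a \<in> V" using assms \<open>e \<in> E\<close> \<open>a \<in> e\<close> by (auto simp: simple_graph_def)
  moreover have "degree E a > 0"
    using \<open>e \<in> E\<close> \<open>a \<in> e\<close> simple_graph_finite_edges[OF assms]
    by (auto simp: degree_def card_gt_0_iff)
  moreover have "degree E a \<le> max_degree V E"
    unfolding max_degree_def using fin \<open>a \<in> V\<close> by (intro Max_ge) auto
  ultimately have "max_degree V E > 0" by linarith
  moreover have "max_degree V E \<in> insert 0 (degree E ` V)"
    unfolding max_degree_def using fin by (intro Max_in) auto
  ultimately show ?thesis using that by auto
qed

lemma zagreb_bound_arith:
  fixes d n :: int
  assumes "d \<ge> 0"
  shows "d * (d + 1) + n * (n + 5) \<le>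
    max (2*d^2 + (d + n)^2 + (6 - 2*d)*(d + n) - 2*d - 4)
        (2*d^2 + (d + n)^2 + (4 - 2*d)*(d + n) + 4)"
proof -
  have "2*d^2 + (d + n)^2 + (6 - 2*d)*(d + n) - 2*d - 4 = d * (d + 1) + n * (n + 5) + (n + 3*d - 4)"
    "2*d^2 + (d + n)^2 + (4 - 2*d)*(d + n) + 4 = d * (d + 1) + n * (n + 5) + (3*d - n + 4)"
    by (simp_all add: power2_eq_square algebra_simps)
  then show ?thesis using assms by (simp only: le_max_iff_disj) linarith
qed

theorem theorem2p1:
  fixes V :: "'a set" and E :: "'a set set"
  assumes "simple_graph V E"
    and "\<forall>C\<in>components V E. \<exists>e\<in>E. e \<subseteq> C"
  shows "int (first_zagreb V E) \<le>
    (let m = int (card E); \<Delta> = int (max_degree V E) in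
      max (2*\<Delta>^2 + m^2 + (6 - 2*\<Delta>)*m - 2*\<Delta> - 4)
        (max (2*\<Delta>^2 + m^2 + (4 - 2*\<Delta>)*m + 4) (m*(m - 1))))"
proof -
  obtain u where u: "degree E u = max_degree V E"
    using ex_degree_eq_max_degree[OF assms(1)] .
  define d where "d = degree E u"
  define n where "n = card E - d"
  have "d \<le> card E"
    using card_mono[OF simple_graph_finite_edges[OF assms(1)], of "{e\<in>E. u \<in> e}"]
    by (auto simp: d_def degree_def)
  then have m: "int (card E) = int d + int n" by (simp add: n_def)
  have "first_zagreb V E \<le> d * (d + 1) + n * (n + 5)"
    unfolding d_def n_def by (rule first_zagreb_le_degree_bound[OF assms(1)])
  then have "int (first_zagreb V E) \<le> int (d * (d + 1) + n * (n + 5))"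
    by (simp only: of_nat_le_iff)
  also have "\<dots> = int d * (int d + 1) + int n * (int n + 5)"
    by (simp add: algebra_simps)
  also have "\<dots> \<le> max (2*int d^2 + (int d + int n)^2 + (6 - 2*int d)*(int d + int n) - 2*int d - 4)
        (2*int d^2 + (int d + int n)^2 + (4 - 2*int d)*(int d + int n) + 4)"
    by (rule zagreb_bound_arith) simp
  finally show ?thesis
    unfolding Let_def m u[folded d_def, symmetric] by (simp add: max.coboundedI1)
qed

end
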